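(* Let $\mathcal S$ be a triangulated category with a good metric $\mathcal M=\{B_n\}_n$. Let $\mathbf E=(E_n,e_n)_n$ be a Cauchy sequence compactly supported at $s\in\mathbb N$, and $E:=\operatorname{moco}\mathbf E$. Let $\mathbf F=(F_n,f_n)_n$ be any sequence in $\mathcal S$ with $F_n\in B_s^\perp$ for all $n$. If $E\cong\operatorname{moco}\mathbf F$, then $E$ is, in $\mathrm{Mod}\text{-}\mathcal S$, a direct summand of $\operatorname{Hom}_{\mathcal S}(-,X)$ for some $X\in\mathcal S$.
   Context: $\mathrm{Mod}\text{-}\mathcal S$ is the category of additive functors $\mathcal S^{op}\to\mathrm{Ab}$. For a sequence $\mathbf E=(E_n,e_n)$ (diagram $E_1\xrightarrow{e_1}E_2\to\cdots$), $\operatorname{moco}\mathbf E:=\varinjlim_n\operatorname{Hom}_{\mathcal S}(-,E_n)$ in $\mathrm{Mod}\text{-}\mathcal S$. Good metric: chain $B_1\supseteq B_2\supseteq\cdots$ of full subcategories each containing $0$, extension closed, $\Sigma^{-1}B_{n+1}\cup B_{n+1}\cup\Sigma B_{n+1}\subseteq B_n$. $\mathbf E$ is Cauchy if for every $m$, $\mathrm{cone}(e_n)\in B_m$ for all large $n$; it is compactly supported at $s$ if $\operatorname{moco}\mathbf E$ vanishes on all objects of $B_s$. $B_s^\perp=\{Y\in\mathcal S:\operatorname{Hom}(B,Y)=0\ \forall B\in B_s\}$. *)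

theory Defs
  imports Main
begin

text \<open>A (small) category is given by an object set, hom-sets (each morphism has a unique
 source and target), composition (cmp g f = g o f) and identities.\<close>

record ('o,'m) tcat =
  Ob :: "'o set"
  Hom :: "'o \<Rightarrow> 'o \<Rightarrow> 'm set"
  cmp :: "'m \<Rightarrow> 'm \<Rightarrow> 'm"
  idm :: "'o \<Rightarrow> 'm"
  madd :: "'m \<Rightarrow> 'm \<Rightarrow> 'm"
  mneg :: "'m \<Rightarrow> 'm"
  mzero :: "'o \<Rightarrow> 'o \<Rightarrow> 'm"
  Sh :: "'o \<Rightarrow> 'o"
  Shm :: "'m \<Rightarrow> 'm"
  Dist :: "('o \<times> 'o \<times> 'o \<times> 'm \<times> 'm \<times> 'm) set"

definition is_category :: "('o,'m,'z) tcat_scheme \<Rightarrow> bool" where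
  "is_category C \<longleftrightarrow>
     (\<forall>X Y. Hom C X Y \<noteq> {} \<longrightarrow> X \<in> Ob C \<and> Y \<in> Ob C) \<and>
     (\<forall>X Y X' Y'. Hom C X Y \<inter> Hom C X' Y' \<noteq> {} \<longrightarrow> X = X' \<and> Y = Y') \<and>
     (\<forall>X\<in>Ob C. idm C X \<in> Hom C X X) \<and>
     (\<forall>X Y Z f g. f \<in> Hom C X Y \<longrightarrow> g \<in> Hom C Y Z \<longrightarrow> cmp C g f \<in> Hom C X Z) \<and>
     (\<forall>X Y f. f \<in> Hom C X Y \<longrightarrow> cmp C (idm C Y) f = f \<and> cmp C f (idm C X) = f) \<and>
     (\<forall>W X Y Z f g h. f \<in> Hom C W X \<longrightarrow> g \<in> Hom C X Y \<longrightarrow> h \<in> Hom C Y Z \<longrightarrow>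
        cmp C h (cmp C g f) = cmp C (cmp C h g) f)"

definition is_preadditive :: "('o,'m,'z) tcat_scheme \<Rightarrow> bool" where
  "is_preadditive C \<longleftrightarrow> is_category C \<and>
     (\<forall>X\<in>Ob C. \<forall>Y\<in>Ob C.
        mzero C X Y \<in> Hom C X Y \<and>
        (\<forall>f\<in>Hom C X Y. \<forall>g\<in>Hom C X Y. madd C f g \<in> Hom C X Y \<and> madd C f g = madd C g f) \<and>
        (\<forall>f\<in>Hom C X Y. \<forall>g\<in>Hom C X Y. \<forall>h\<in>Hom C X Y.
            madd C (madd C f g) h = madd C f (madd C g h)) \<and>
        (\<forall>f\<in>Hom C X Y. madd C (mzero C X Y) f = f) \<and>
        (\<forall>f\<in>Hom C X Y. mneg C f \<in> Hom C X Y \<and> madd C f (mneg C f) = mzero C X Y)) \<and>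
     (\<forall>X Y Z f g h. f \<in> Hom C X Y \<longrightarrow> g \<in> Hom C X Y \<longrightarrow> h \<in> Hom C Y Z \<longrightarrow>
        cmp C h (madd C f g) = madd C (cmp C h f) (cmp C h g)) \<and>
     (\<forall>X Y Z f g h. h \<in> Hom C X Y \<longrightarrow> f \<in> Hom C Y Z \<longrightarrow> g \<in> Hom C Y Z \<longrightarrow>
        cmp C (madd C f g) h = madd C (cmp C f h) (cmp C g h))"

definition is_zero_obj :: "('o,'m,'z) tcat_scheme \<Rightarrow> 'o \<Rightarrow> bool" where
  "is_zero_obj C Z \<longleftrightarrow> Z \<in> Ob C \<and>
     (\<forall>X\<in>Ob C. Hom C Z X = {mzero C Z X} \<and> Hom C X Z = {mzero C X Z})"

definition is_additive :: "('o,'m,'z) tcat_scheme \<Rightarrow> bool" where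
  "is_additive C \<longleftrightarrow> is_preadditive C \<and> (\<exists>Z. is_zero_obj C Z) \<and>
     (\<forall>X\<in>Ob C. \<forall>Y\<in>Ob C. \<exists>P i1 i2 p1 p2.
        i1 \<in> Hom C X P \<and> i2 \<in> Hom C Y P \<and> p1 \<in> Hom C P X \<and> p2 \<in> Hom C P Y \<and>
        cmp C p1 i1 = idm C X \<and> cmp C p2 i2 = idm C Y \<and>
        cmp C p2 i1 = mzero C X Y \<and> cmp C p1 i2 = mzero C Y X \<and>
        madd C (cmp C i1 p1) (cmp C i2 p2) = idm C P)"

definition is_iso :: "('o,'m,'z) tcat_scheme \<Rightarrow> 'o \<Rightarrow> 'o \<Rightarrow> 'm \<Rightarrow> bool" where
  "is_iso C X Y f \<longleftrightarrow> f \<in> Hom C X Y \<and>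
     (\<exists>g\<in>Hom C Y X. cmp C g f = idm C X \<and> cmp C f g = idm C Y)"

definition is_triangle :: "('o,'m,'z) tcat_scheme \<Rightarrow> 'o \<times> 'o \<times> 'o \<times> 'm \<times> 'm \<times> 'm \<Rightarrow> bool" where
  "is_triangle C T \<longleftrightarrow> (case T of (X,Y,Z,u,v,w) \<Rightarrow>
     u \<in> Hom C X Y \<and> v \<in> Hom C Y Z \<and> w \<in> Hom C Z (Sh C X))"

definition is_triangulated :: "('o,'m,'z) tcat_scheme \<Rightarrow> bool" where
  "is_triangulated C \<longleftrightarrow> is_additive C \<and>
     \<comment> \<open>the shift is an additive automorphism\<close>
     bij_betw (Sh C) (Ob C) (Ob C) \<and>
     (\<forall>X\<in>Ob C. \<forall>Y\<in>Ob C. bij_betw (Shm C) (Hom C X Y) (Hom C (Sh C X) (Sh C Y))) \<and>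
     (\<forall>X\<in>Ob C. Shm C (idm C X) = idm C (Sh C X)) \<and>
     (\<forall>X Y Z f g. f \<in> Hom C X Y \<longrightarrow> g \<in> Hom C Y Z \<longrightarrow>
        Shm C (cmp C g f) = cmp C (Shm C g) (Shm C f)) \<and>
     (\<forall>X Y f g. f \<in> Hom C X Y \<longrightarrow> g \<in> Hom C X Y \<longrightarrow>
        Shm C (madd C f g) = madd C (Shm C f) (Shm C g)) \<and>
     \<comment> \<open>distinguished triangles are triangles\<close>
     (\<forall>T\<in>Dist C. is_triangle C T) \<and>
     \<comment> \<open>TR1: closure under isomorphism of triangles\<close>
     (\<forall>X Y Z u v w X' Y' Z' u' v' w' a b c.
        (X,Y,Z,u,v,w) \<in> Dist C \<longrightarrow> is_triangle C (X',Y',Z',u',v',w') \<longrightarrow>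
        is_iso C X X' a \<longrightarrow> is_iso C Y Y' b \<longrightarrow> is_iso C Z Z' c \<longrightarrow>
        cmp C b u = cmp C u' a \<longrightarrow> cmp C c v = cmp C v' b \<longrightarrow>
        cmp C (Shm C a) w = cmp C w' c \<longrightarrow> (X',Y',Z',u',v',w') \<in> Dist C) \<and>
     \<comment> \<open>TR1: X -> X -> 0 -> Sh X is distinguished\<close>
     (\<forall>X\<in>Ob C. \<forall>Z. is_zero_obj C Z \<longrightarrow>
        (X, X, Z, idm C X, mzero C X Z, mzero C Z (Sh C X)) \<in> Dist C) \<and>
     \<comment> \<open>TR1: every morphism sits in a distinguished triangle\<close>
     (\<forall>X Y u. u \<in> Hom C X Y \<longrightarrow> (\<exists>Z v w. (X,Y,Z,u,v,w) \<in> Dist C)) \<and>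
     \<comment> \<open>TR2: rotation\<close>
     (\<forall>X Y Z u v w. is_triangle C (X,Y,Z,u,v,w) \<longrightarrow>
        ((X,Y,Z,u,v,w) \<in> Dist C \<longleftrightarrow> (Y, Z, Sh C X, v, w, mneg C (Shm C u)) \<in> Dist C)) \<and>
     \<comment> \<open>TR3: morphisms of triangles\<close>
     (\<forall>X Y Z u v w X' Y' Z' u' v' w' a b.
        (X,Y,Z,u,v,w) \<in> Dist C \<longrightarrow> (X',Y',Z',u',v',w') \<in> Dist C \<longrightarrow>
        a \<in> Hom C X X' \<longrightarrow> b \<in> Hom C Y Y' \<longrightarrow> cmp C b u = cmp C u' a \<longrightarrow>
        (\<exists>c\<in>Hom C Z Z'. cmp C c v = cmp C v' b \<and> cmp C (Shm C a) w = cmp C w' c)) \<and>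
     \<comment> \<open>TR4: octahedral axiom\<close>
     (\<forall>X Y Z f g Q1 p1 d1 Q2 p2 d2 Q3 p3 d3.
        f \<in> Hom C X Y \<longrightarrow> g \<in> Hom C Y Z \<longrightarrow>
        (X,Y,Q1,f,p1,d1) \<in> Dist C \<longrightarrow> (X,Z,Q2,cmp C g f,p2,d2) \<in> Dist C \<longrightarrow>
        (Y,Z,Q3,g,p3,d3) \<in> Dist C \<longrightarrow>
        (\<exists>a b. (Q1,Q2,Q3,a,b,cmp C (Shm C p1) d3) \<in> Dist C \<and>
           cmp C a p1 = cmp C p2 g \<and> cmp C d2 a = d1 \<and>
           cmp C b p2 = p3 \<and> cmp C d3 b = cmp C (Shm C f) d2))"

definition ext_closed :: "('o,'m,'z) tcat_scheme \<Rightarrow> 'o set \<Rightarrow> bool" where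
  "ext_closed C B \<longleftrightarrow>
     (\<forall>X Y Z u v w. (X,Y,Z,u,v,w) \<in> Dist C \<longrightarrow> X \<in> B \<longrightarrow> Z \<in> B \<longrightarrow> Y \<in> B)"

text \<open>Indices start at 0 (the paper starts at 1; this is only a shift of indices).\<close>
definition good_metric :: "('o,'m,'z) tcat_scheme \<Rightarrow> (nat \<Rightarrow> 'o set) \<Rightarrow> bool" where
  "good_metric C B \<longleftrightarrow> (\<forall>n.
     B n \<subseteq> Ob C \<and> (\<exists>Z\<in>B n. is_zero_obj C Z) \<and> ext_closed C (B n) \<and>
     B (Suc n) \<subseteq> B n \<and>
     {X\<in>Ob C. Sh C X \<in> B (Suc n)} \<subseteq> B n \<and> Sh C ` B (Suc n) \<subseteq> B n)"

definition is_seq :: "('o,'m,'z) tcat_scheme \<Rightarrow> (nat \<Rightarrow> 'o) \<Rightarrow> (nat \<Rightarrow> 'm) \<Rightarrow> bool" where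
  "is_seq C E e \<longleftrightarrow> (\<forall>n. E n \<in> Ob C \<and> e n \<in> Hom C (E n) (E (Suc n)))"

text \<open>cone(e_n) lies in B (cones are unique up to isomorphism).\<close>
definition cone_in :: "('o,'m,'z) tcat_scheme \<Rightarrow> (nat \<Rightarrow> 'o) \<Rightarrow> (nat \<Rightarrow> 'm) \<Rightarrow> nat \<Rightarrow> 'o set \<Rightarrow> bool" where
  "cone_in C E e n B \<longleftrightarrow> (\<exists>Z v w. (E n, E (Suc n), Z, e n, v, w) \<in> Dist C \<and> Z \<in> B)"

definition is_cauchy :: "('o,'m,'z) tcat_scheme \<Rightarrow> (nat \<Rightarrow> 'o set) \<Rightarrow> (nat \<Rightarrow> 'o) \<Rightarrow> (nat \<Rightarrow> 'm) \<Rightarrow> bool" where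
  "is_cauchy C B E e \<longleftrightarrow> (\<forall>m. \<exists>N. \<forall>n\<ge>N. cone_in C E e n (B m))"

definition perp :: "('o,'m,'z) tcat_scheme \<Rightarrow> 'o set \<Rightarrow> 'o set" where
  "perp C B = {Y\<in>Ob C. \<forall>X\<in>B. Hom C X Y = {mzero C X Y}}"

record ('o,'m,'x) smod =
  modCar :: "'o \<Rightarrow> 'x set"
  modAct :: "'o \<Rightarrow> 'o \<Rightarrow> 'm \<Rightarrow> 'x \<Rightarrow> 'x"  \<comment> \<open>modAct A B f : M(B) -> M(A) for f : A -> B\<close>
  modAdd :: "'o \<Rightarrow> 'x \<Rightarrow> 'x \<Rightarrow> 'x"
  modZero :: "'o \<Rightarrow> 'x"

definition mod_hom :: "('o,'m,'z) tcat_scheme \<Rightarrow> ('o,'m,'x) smod \<Rightarrow> ('o,'m,'y) smod \<Rightarrow> ('o \<Rightarrow> 'x \<Rightarrow> 'y) \<Rightarrow> bool" where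
  "mod_hom C M N \<eta> \<longleftrightarrow> (\<forall>A\<in>Ob C.
     (\<forall>x\<in>modCar M A. \<eta> A x \<in> modCar N A) \<and>
     (\<forall>x\<in>modCar M A. \<forall>y\<in>modCar M A. \<eta> A (modAdd M A x y) = modAdd N A (\<eta> A x) (\<eta> A y)) \<and>
     (\<forall>B\<in>Ob C. \<forall>f\<in>Hom C A B. \<forall>x\<in>modCar M B.
        \<eta> A (modAct M A B f x) = modAct N A B f (\<eta> B x)))"

definition mod_iso :: "('o,'m,'z) tcat_scheme \<Rightarrow> ('o,'m,'x) smod \<Rightarrow> ('o,'m,'y) smod \<Rightarrow> bool" where
  "mod_iso C M N \<longleftrightarrow> (\<exists>\<eta> \<theta>. mod_hom C M N \<eta> \<and> mod_hom C N M \<theta> \<and>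
     (\<forall>A\<in>Ob C. \<forall>x\<in>modCar M A. \<theta> A (\<eta> A x) = x) \<and>
     (\<forall>A\<in>Ob C. \<forall>y\<in>modCar N A. \<eta> A (\<theta> A y) = y))"

definition direct_summand :: "('o,'m,'z) tcat_scheme \<Rightarrow> ('o,'m,'x) smod \<Rightarrow> ('o,'m,'y) smod \<Rightarrow> bool" where
  "direct_summand C M N \<longleftrightarrow> (\<exists>i p. mod_hom C M N i \<and> mod_hom C N M p \<and>
     (\<forall>A\<in>Ob C. \<forall>x\<in>modCar M A. p A (i A x) = x))"

definition hom_mod :: "('o,'m,'z) tcat_scheme \<Rightarrow> 'o \<Rightarrow> ('o,'m,'m) smod" where
  "hom_mod C X = \<lparr> modCar = (\<lambda>A. Hom C A X), modAct = (\<lambda>A B f g. cmp C g f),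
                   modAdd = (\<lambda>A. madd C), modZero = (\<lambda>A. mzero C A X) \<rparr>"

section \<open>moco: the colimit of Hom(-,E_n), computed objectwise\<close>

fun trd :: "('o,'m,'z) tcat_scheme \<Rightarrow> (nat \<Rightarrow> 'o) \<Rightarrow> (nat \<Rightarrow> 'm) \<Rightarrow> nat \<Rightarrow> nat \<Rightarrow> 'm" where
  "trd C E e n 0 = idm C (E n)"
| "trd C E e n (Suc d) = cmp C (e (n + d)) (trd C E e n d)"

definition trm :: "('o,'m,'z) tcat_scheme \<Rightarrow> (nat \<Rightarrow> 'o) \<Rightarrow> (nat \<Rightarrow> 'm) \<Rightarrow> nat \<Rightarrow> nat \<Rightarrow> 'm" where
  "trm C E e n k = trd C E e n (k - n)"

definition germ_rel :: "('o,'m,'z) tcat_scheme \<Rightarrow> (nat \<Rightarrow> 'o) \<Rightarrow> (nat \<Rightarrow> 'm) \<Rightarrow> 'o \<Rightarrow> nat \<times> 'm \<Rightarrow> nat \<times> 'm \<Rightarrow> bool" where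
  "germ_rel C E e A p q \<longleftrightarrow> (case p of (n,f) \<Rightarrow> case q of (m,g) \<Rightarrow>
     f \<in> Hom C A (E n) \<and> g \<in> Hom C A (E m) \<and>
     (\<exists>k\<ge>max n m. cmp C (trm C E e n k) f = cmp C (trm C E e m k) g))"

definition germ :: "('o,'m,'z) tcat_scheme \<Rightarrow> (nat \<Rightarrow> 'o) \<Rightarrow> (nat \<Rightarrow> 'm) \<Rightarrow> 'o \<Rightarrow> nat \<times> 'm \<Rightarrow> (nat \<times> 'm) set" where
  "germ C E e A p = {q. germ_rel C E e A p q}"

definition rep :: "(nat \<times> 'm) set \<Rightarrow> nat \<times> 'm" where
  "rep x = (SOME p. p \<in> x)"

definition moco :: "('o,'m,'z) tcat_scheme \<Rightarrow> (nat \<Rightarrow> 'o) \<Rightarrow> (nat \<Rightarrow> 'm) \<Rightarrow> ('o,'m,(nat \<times> 'm) set) smod" where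
  "moco C E e = \<lparr>
     modCar = (\<lambda>A. {germ C E e A (n,f) | n f. f \<in> Hom C A (E n)}),
     modAct = (\<lambda>A B h x. germ C E e A (fst (rep x), cmp C (snd (rep x)) h)),
     modAdd = (\<lambda>A x y. (let n = fst (rep x); f = snd (rep x); m = fst (rep y); g = snd (rep y);
                            k = max n m
                        in germ C E e A (k, madd C (cmp C (trm C E e n k) f) (cmp C (trm C E e m k) g)))),
     modZero = (\<lambda>A. germ C E e A (0, mzero C A (E 0))) \<rparr>"

definition compactly_supported :: "('o,'m,'z) tcat_scheme \<Rightarrow> 'o set \<Rightarrow> (nat \<Rightarrow> 'o) \<Rightarrow> (nat \<Rightarrow> 'm) \<Rightarrow> bool" where
  "compactly_supported C B E e \<longleftrightarrow>
     (\<forall>A\<in>B. modCar (moco C E e) A = {modZero (moco C E e) A})"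

end

theory Submission
  imports Defs
begin

text \<open>Choose \<open>N\<close> with \<open>cone(e n) \<in> B (s+1)\<close> for \<open>n \<ge> N\<close>.  Then \<open>cone(e n)\<close> and its
  desuspension lie in \<open>B s\<close>, so for \<open>T \<in> perp (B s)\<close> the long exact Hom-sequence makes
  restriction along \<open>e n\<close> a bijection \<open>Hom(E (n+1), T) \<rightarrow> Hom(E n, T)\<close>.
  The isomorphism \<open>\<eta> : moco E \<cong> moco F\<close> sends the germ of \<open>id (E N)\<close> to the germ of some
  \<open>g : E N \<rightarrow> F m\<close>; as \<open>F m \<in> perp (B s)\<close>, \<open>g\<close> extends uniquely to a cocone
  \<open>G k : E k \<rightarrow> F m\<close>, which induces \<open>i : moco E \<rightarrow> Hom(-, F m)\<close>.  Uniqueness of such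
  extensions into every \<open>F L\<close> shows that \<open>\<eta>\<close> is \<open>i\<close> followed by the germ map
  \<open>Hom(-, F m) \<rightarrow> moco F\<close>; composing the latter with \<open>\<eta>\<inverse>\<close> yields a retraction of \<open>i\<close>.\<close>

locale category =
  fixes C :: "('o,'m,'z) tcat_scheme"
  assumes is_category: "is_category C"
begin

lemma hom_objs: "f \<in> Hom C X Y \<Longrightarrow> X \<in> Ob C \<and> Y \<in> Ob C"
  using is_category unfolding is_category_def by (metis empty_iff)

lemma id_hom: "X \<in> Ob C \<Longrightarrow> idm C X \<in> Hom C X X"
  using is_category unfolding is_category_def by simp

lemma comp_hom: "f \<in> Hom C X Y \<Longrightarrow> g \<in> Hom C Y Z \<Longrightarrow> cmp C g f \<in> Hom C X Z"
  using is_category unfolding is_category_def by simp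

lemma comp_id_left: "f \<in> Hom C X Y \<Longrightarrow> cmp C (idm C Y) f = f"
  using is_category unfolding is_category_def by simp

lemma comp_id_right: "f \<in> Hom C X Y \<Longrightarrow> cmp C f (idm C X) = f"
  using is_category unfolding is_category_def by simp

lemma comp_assoc:
  "f \<in> Hom C W X \<Longrightarrow> g \<in> Hom C X Y \<Longrightarrow> h \<in> Hom C Y Z \<Longrightarrow>
    cmp C h (cmp C g f) = cmp C (cmp C h g) f"
  using is_category unfolding is_category_def by simp

end

locale preadditive =
  fixes C :: "('o,'m,'z) tcat_scheme"
  assumes is_preadditive: "is_preadditive C"

sublocale preadditive \<subseteq> category
  using is_preadditive by unfold_locales (simp add: is_preadditive_def)

context preadditive
begin

lemma hom_abelian_group:
  assumes "X \<in> Ob C" "Y \<in> Ob C"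
  shows "mzero C X Y \<in> Hom C X Y \<and>
    (\<forall>f\<in>Hom C X Y. \<forall>g\<in>Hom C X Y. madd C f g \<in> Hom C X Y \<and> madd C f g = madd C g f) \<and>
    (\<forall>f\<in>Hom C X Y. \<forall>g\<in>Hom C X Y. \<forall>h\<in>Hom C X Y.
        madd C (madd C f g) h = madd C f (madd C g h)) \<and>
    (\<forall>f\<in>Hom C X Y. madd C (mzero C X Y) f = f) \<and>
    (\<forall>f\<in>Hom C X Y. mneg C f \<in> Hom C X Y \<and> madd C f (mneg C f) = mzero C X Y)"
  using is_preadditive unfolding is_preadditive_def
  by (elim conjE) (drule bspec[OF _ assms(1)], drule bspec[OF _ assms(2)], assumption)

lemma zero_hom: "X \<in> Ob C \<Longrightarrow> Y \<in> Ob C \<Longrightarrow> mzero C X Y \<in> Hom C X Y"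
  using hom_abelian_group by blast

lemma add_hom: "f \<in> Hom C X Y \<Longrightarrow> g \<in> Hom C X Y \<Longrightarrow> madd C f g \<in> Hom C X Y"
  using hom_abelian_group hom_objs by blast

lemma add_commute: "f \<in> Hom C X Y \<Longrightarrow> g \<in> Hom C X Y \<Longrightarrow> madd C f g = madd C g f"
  using hom_abelian_group hom_objs by blast

lemma add_assoc:
  "f \<in> Hom C X Y \<Longrightarrow> g \<in> Hom C X Y \<Longrightarrow> h \<in> Hom C X Y \<Longrightarrow>
    madd C (madd C f g) h = madd C f (madd C g h)"
  using hom_abelian_group hom_objs by blast

lemma zero_add: "f \<in> Hom C X Y \<Longrightarrow> madd C (mzero C X Y) f = f"
  using hom_abelian_group hom_objs by blast

lemma neg_hom: "f \<in> Hom C X Y \<Longrightarrow> mneg C f \<in> Hom C X Y"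
  using hom_abelian_group hom_objs by blast

lemma add_neg: "f \<in> Hom C X Y \<Longrightarrow> madd C f (mneg C f) = mzero C X Y"
  using hom_abelian_group hom_objs by blast

lemma add_zero:
  assumes "f \<in> Hom C X Y"
  shows "madd C f (mzero C X Y) = f"
proof -
  have "mzero C X Y \<in> Hom C X Y" using zero_hom hom_objs[OF assms] by blast
  then show ?thesis using add_commute zero_add assms by metis
qed

lemma comp_distrib_left:
  "f \<in> Hom C X Y \<Longrightarrow> g \<in> Hom C X Y \<Longrightarrow> h \<in> Hom C Y Z \<Longrightarrow>
    cmp C h (madd C f g) = madd C (cmp C h f) (cmp C h g)"
  using is_preadditive unfolding is_preadditive_def by simp

lemma comp_distrib_right:
  "h \<in> Hom C X Y \<Longrightarrow> f \<in> Hom C Y Z \<Longrightarrow> g \<in> Hom C Y Z \<Longrightarrow>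
    cmp C (madd C f g) h = madd C (cmp C f h) (cmp C g h)"
  using is_preadditive unfolding is_preadditive_def by simp

lemma neg_unique:
  assumes f: "f \<in> Hom C X Y" and g: "g \<in> Hom C X Y" and "madd C f g = mzero C X Y"
  shows "g = mneg C f"
proof -
  have n: "mneg C f \<in> Hom C X Y" using neg_hom f .
  have "g = madd C (madd C (mneg C f) f) g"
    using add_neg[OF f] add_commute[OF f n] zero_add[OF g] by simp
  also have "\<dots> = madd C (mneg C f) (madd C f g)" using add_assoc[OF n f g] .
  also have "\<dots> = mneg C f" using assms(3) add_zero[OF n] by simp
  finally show ?thesis .
qed

lemma add_idem_imp_zero:
  assumes f: "f \<in> Hom C X Y" and "madd C f f = f"
  shows "f = mzero C X Y"
proof -
  have n: "mneg C f \<in> Hom C X Y" using neg_hom f .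
  have "mzero C X Y = madd C (madd C f f) (mneg C f)" using assms(2) add_neg[OF f] by simp
  also have "\<dots> = f" using add_assoc[OF f f n] add_neg[OF f] add_zero[OF f] by simp
  finally show ?thesis by simp
qed

lemma neg_neg:
  assumes f: "f \<in> Hom C X Y"
  shows "mneg C (mneg C f) = f"
proof -
  have n: "mneg C f \<in> Hom C X Y" using neg_hom f .
  have "madd C (mneg C f) f = mzero C X Y" using add_neg[OF f] add_commute[OF f n] by simp
  then show ?thesis by (rule neg_unique[OF n f, symmetric])
qed

lemma eq_if_add_neg_zero:
  assumes f: "f \<in> Hom C X Y" and g: "g \<in> Hom C X Y"
    and "madd C f (mneg C g) = mzero C X Y"
  shows "f = g"
proof -
  have n: "mneg C g \<in> Hom C X Y" using neg_hom g .
  have "madd C (mneg C g) f = mzero C X Y" using assms(3) add_commute[OF f n] by simp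
  then have "f = mneg C (mneg C g)" by (rule neg_unique[OF n f])
  then show ?thesis using neg_neg[OF g] by simp
qed

lemma comp_zero_left:
  assumes f: "f \<in> Hom C X Y" and Z: "Z \<in> Ob C"
  shows "cmp C (mzero C Y Z) f = mzero C X Z"
proof -
  have z: "mzero C Y Z \<in> Hom C Y Z" using f Z hom_objs zero_hom by blast
  have "madd C (cmp C (mzero C Y Z) f) (cmp C (mzero C Y Z) f)
      = cmp C (madd C (mzero C Y Z) (mzero C Y Z)) f"
    using comp_distrib_right[OF f z z] by (rule sym)
  also have "\<dots> = cmp C (mzero C Y Z) f" using zero_add[OF z] by simp
  finally show ?thesis by (rule add_idem_imp_zero[OF comp_hom[OF f z]])
qed

lemma comp_zero_right:
  assumes g: "g \<in> Hom C Y Z" and X: "X \<in> Ob C"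
  shows "cmp C g (mzero C X Y) = mzero C X Z"
proof -
  have z: "mzero C X Y \<in> Hom C X Y" using g X hom_objs zero_hom by blast
  have "madd C (cmp C g (mzero C X Y)) (cmp C g (mzero C X Y))
      = cmp C g (madd C (mzero C X Y) (mzero C X Y))"
    using comp_distrib_left[OF z z g] by (rule sym)
  also have "\<dots> = cmp C g (mzero C X Y)" using zero_add[OF z] by simp
  finally show ?thesis by (rule add_idem_imp_zero[OF comp_hom[OF z g]])
qed

lemma comp_neg_left:
  assumes f: "f \<in> Hom C Y Z" and g: "g \<in> Hom C X Y"
  shows "cmp C (mneg C f) g = mneg C (cmp C f g)"
proof -
  have n: "mneg C f \<in> Hom C Y Z" using neg_hom f .
  have "madd C (cmp C f g) (cmp C (mneg C f) g) = mzero C X Z"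
    using comp_distrib_right[OF g f n] add_neg[OF f] comp_zero_left[OF g] f hom_objs by simp
  then show ?thesis by (rule neg_unique[OF comp_hom[OF g f] comp_hom[OF g n]])
qed

lemma comp_neg_right:
  assumes f: "f \<in> Hom C Y Z" and g: "g \<in> Hom C X Y"
  shows "cmp C f (mneg C g) = mneg C (cmp C f g)"
proof -
  have n: "mneg C g \<in> Hom C X Y" using neg_hom g .
  have "madd C (cmp C f g) (cmp C f (mneg C g)) = mzero C X Z"
    using comp_distrib_left[OF g n f] add_neg[OF g] comp_zero_right[OF f] g hom_objs by simp
  then show ?thesis by (rule neg_unique[OF comp_hom[OF g f] comp_hom[OF n f]])
qed

end

section \<open>Triangulated categories\<close>

locale triangulated =
  fixes C :: "('o,'m,'z) tcat_scheme"
  assumes is_triangulated: "is_triangulated C"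

sublocale triangulated \<subseteq> preadditive
proof
  show "is_preadditive C"
    using is_triangulated unfolding is_triangulated_def is_additive_def by (elim conjE)
qed

context triangulated
begin

lemma shift_obj_bij: "bij_betw (Sh C) (Ob C) (Ob C)"
  using is_triangulated unfolding is_triangulated_def by (elim conjE)

lemma shift_hom_bij:
  "X \<in> Ob C \<Longrightarrow> Y \<in> Ob C \<Longrightarrow> bij_betw (Shm C) (Hom C X Y) (Hom C (Sh C X) (Sh C Y))"
  using is_triangulated unfolding is_triangulated_def by simp

lemma shift_hom: "f \<in> Hom C X Y \<Longrightarrow> Shm C f \<in> Hom C (Sh C X) (Sh C Y)"
  using shift_hom_bij hom_objs bij_betwE by blast

lemma shift_hom_image:
  "X \<in> Ob C \<Longrightarrow> Y \<in> Ob C \<Longrightarrow> Hom C (Sh C X) (Sh C Y) = Shm C ` Hom C X Y"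
  using shift_hom_bij unfolding bij_betw_def by blast

lemma shift_hom_inj: "f \<in> Hom C X Y \<Longrightarrow> g \<in> Hom C X Y \<Longrightarrow> Shm C f = Shm C g \<Longrightarrow> f = g"
  using shift_hom_bij hom_objs unfolding bij_betw_def inj_on_def by blast

lemma shift_id: "X \<in> Ob C \<Longrightarrow> Shm C (idm C X) = idm C (Sh C X)"
  using is_triangulated unfolding is_triangulated_def by simp

lemma shift_comp:
  "f \<in> Hom C X Y \<Longrightarrow> g \<in> Hom C Y Z \<Longrightarrow> Shm C (cmp C g f) = cmp C (Shm C g) (Shm C f)"
  using is_triangulated unfolding is_triangulated_def by simp

lemma shift_add:
  "f \<in> Hom C X Y \<Longrightarrow> g \<in> Hom C X Y \<Longrightarrow> Shm C (madd C f g) = madd C (Shm C f) (Shm C g)"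
  using is_triangulated unfolding is_triangulated_def by simp

lemma shift_zero:
  assumes "X \<in> Ob C" "Y \<in> Ob C"
  shows "Shm C (mzero C X Y) = mzero C (Sh C X) (Sh C Y)"
proof -
  have z: "mzero C X Y \<in> Hom C X Y" using assms zero_hom by blast
  have "madd C (Shm C (mzero C X Y)) (Shm C (mzero C X Y))
      = Shm C (madd C (mzero C X Y) (mzero C X Y))"
    using shift_add[OF z z] by (rule sym)
  also have "\<dots> = Shm C (mzero C X Y)" using zero_add[OF z] by simp
  finally show ?thesis by (rule add_idem_imp_zero[OF shift_hom[OF z]])
qed

lemma shift_neg:
  assumes f: "f \<in> Hom C X Y"
  shows "Shm C (mneg C f) = mneg C (Shm C f)"
proof -
  have n: "mneg C f \<in> Hom C X Y" using neg_hom f .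
  have "madd C (Shm C f) (Shm C (mneg C f)) = mzero C (Sh C X) (Sh C Y)"
    using shift_add[OF f n] add_neg[OF f] shift_zero f hom_objs by simp
  then show ?thesis by (rule neg_unique[OF shift_hom[OF f] shift_hom[OF n]])
qed

lemma dist_homs:
  assumes "(X,Y,Z,u,v,w) \<in> Dist C"
  shows "u \<in> Hom C X Y \<and> v \<in> Hom C Y Z \<and> w \<in> Hom C Z (Sh C X)"
proof -
  have "\<forall>T\<in>Dist C. is_triangle C T"
    using is_triangulated unfolding is_triangulated_def by (elim conjE)
  then show ?thesis using assms unfolding is_triangle_def by fastforce
qed

lemma dist_rotate:
  assumes "(X,Y,Z,u,v,w) \<in> Dist C"
  shows "(Y, Z, Sh C X, v, w, mneg C (Shm C u)) \<in> Dist C"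
proof -
  have "is_triangle C (X,Y,Z,u,v,w)"
    using dist_homs[OF assms] unfolding is_triangle_def by simp
  moreover have "\<forall>X Y Z u v w. is_triangle C (X,Y,Z,u,v,w) \<longrightarrow>
      ((X,Y,Z,u,v,w) \<in> Dist C \<longleftrightarrow> (Y, Z, Sh C X, v, w, mneg C (Shm C u)) \<in> Dist C)"
    using is_triangulated unfolding is_triangulated_def by (elim conjE)
  ultimately show ?thesis using assms by blast
qed

lemma dist_morphism:
  assumes "(X,Y,Z,u,v,w) \<in> Dist C" "(X',Y',Z',u',v',w') \<in> Dist C"
    and "a \<in> Hom C X X'" "b \<in> Hom C Y Y'" "cmp C b u = cmp C u' a"
  shows "\<exists>c\<in>Hom C Z Z'. cmp C c v = cmp C v' b \<and> cmp C (Shm C a) w = cmp C w' c"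
proof -
  have "\<forall>X Y Z u v w X' Y' Z' u' v' w' a b.
      (X,Y,Z,u,v,w) \<in> Dist C \<longrightarrow> (X',Y',Z',u',v',w') \<in> Dist C \<longrightarrow>
      a \<in> Hom C X X' \<longrightarrow> b \<in> Hom C Y Y' \<longrightarrow> cmp C b u = cmp C u' a \<longrightarrow>
      (\<exists>c\<in>Hom C Z Z'. cmp C c v = cmp C v' b \<and> cmp C (Shm C a) w = cmp C w' c)"
    using is_triangulated unfolding is_triangulated_def by (elim conjE)
  then show ?thesis using assms by blast
qed

lemma dist_trivial:
  assumes "X \<in> Ob C" "is_zero_obj C Z"
  shows "(X, X, Z, idm C X, mzero C X Z, mzero C Z (Sh C X)) \<in> Dist C"
proof -
  have "\<forall>X\<in>Ob C. \<forall>Z. is_zero_obj C Z \<longrightarrow>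
      (X, X, Z, idm C X, mzero C X Z, mzero C Z (Sh C X)) \<in> Dist C"
    using is_triangulated unfolding is_triangulated_def by (elim conjE)
  then show ?thesis using assms by blast
qed

lemma zero_obj_exists: "\<exists>Z. is_zero_obj C Z"
  using is_triangulated unfolding is_triangulated_def is_additive_def by (elim conjE)

text \<open>Writing \<open>T = \<Sigma>T'\<close>, the trivial triangle on \<open>T'\<close> rotated twice is
  \<open>0 \<rightarrow> T \<rightarrow> T\<close>; a morphism of triangles into it provides the factorisation.\<close>

lemma dist_hom_exact:
  assumes d: "(X,Y,Z,u,v,w) \<in> Dist C" and t: "t \<in> Hom C Y T"
    and tu: "cmp C t u = mzero C X T"
  shows "\<exists>k\<in>Hom C Z T. cmp C k v = t"
proof -
  obtain T' where T': "T' \<in> Ob C" "T = Sh C T'"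
    using shift_obj_bij t hom_objs unfolding bij_betw_def by blast
  obtain Z0 where Z0: "is_zero_obj C Z0" using zero_obj_exists by blast
  have Z0o: "Z0 \<in> Ob C" using Z0 unfolding is_zero_obj_def by blast
  have d0: "(Z0, T, T, mzero C Z0 T, mneg C (Shm C (idm C T')), mneg C (Shm C (mzero C T' Z0))) \<in> Dist C"
    using dist_rotate[OF dist_rotate[OF dist_trivial[OF T'(1) Z0]]] T'(2) by simp
  have uv: "u \<in> Hom C X Y" "v \<in> Hom C Y Z" using dist_homs[OF d] by auto
  have z: "mzero C X Z0 \<in> Hom C X Z0" using zero_hom hom_objs[OF uv(1)] Z0o by blast
  have "cmp C (mzero C Z0 T) (mzero C X Z0) = mzero C X T"
    using comp_zero_left[OF z] t hom_objs by blast
  then obtain c where c: "c \<in> Hom C Z T" "cmp C c v = cmp C (mneg C (Shm C (idm C T'))) t"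
    using dist_morphism[OF d d0 z t] tu by auto
  have "cmp C c v = mneg C t"
    using c(2) shift_id[OF T'(1)] T'(2) comp_neg_left[OF id_hom t] comp_id_left[OF t] t hom_objs
    by simp
  then have "cmp C (mneg C c) v = t"
    using comp_neg_left[OF c(1) uv(2)] neg_neg[OF t] by simp
  then show ?thesis using neg_hom[OF c(1)] by blast
qed

lemma dist_precomp_inj:
  assumes d: "(X,Y,Z,u,v,w) \<in> Dist C" and Z: "Hom C Z T = {mzero C Z T}"
  shows "inj_on (\<lambda>h. cmp C h u) (Hom C Y T)"
proof (rule inj_onI)
  fix h1 h2 assume h1: "h1 \<in> Hom C Y T" and h2: "h2 \<in> Hom C Y T"
    and eq: "cmp C h1 u = cmp C h2 u"
  have uv: "u \<in> Hom C X Y" "v \<in> Hom C Y Z" using dist_homs[OF d] by auto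
  have n2: "mneg C h2 \<in> Hom C Y T" using neg_hom h2 .
  define d where "d = madd C h1 (mneg C h2)"
  have dh: "d \<in> Hom C Y T" unfolding d_def using add_hom[OF h1 n2] .
  have "cmp C d u = madd C (cmp C h2 u) (mneg C (cmp C h2 u))"
    unfolding d_def using comp_distrib_right[OF uv(1) h1 n2] eq comp_neg_left[OF h2 uv(1)] by simp
  also have "\<dots> = mzero C X T" using add_neg[OF comp_hom[OF uv(1) h2]] .
  finally obtain k where k: "k \<in> Hom C Z T" "cmp C k v = d"
    using dist_hom_exact[OF d dh] by blast
  have "d = mzero C Y T"
    using k Z comp_zero_left[OF uv(2)] h1 hom_objs by auto
  then show "h1 = h2" using eq_if_add_neg_zero[OF h1 h2] unfolding d_def by simp
qed

text \<open>Rotating twice gives the triangle \<open>Z \<rightarrow> \<Sigma>X \<rightarrow> \<Sigma>Y \<rightarrow> \<Sigma>Z\<close>.  As \<open>Z = \<Sigma>Z'\<close> and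
  \<open>Hom(Z',T) = 0\<close>, the composite \<open>Z \<rightarrow> \<Sigma>X \<rightarrow> \<Sigma>T\<close> of \<open>\<Sigma>h\<close> vanishes, so \<open>\<Sigma>h\<close>
  factors through \<open>-\<Sigma>u\<close>; desuspending gives the preimage of \<open>h\<close>.\<close>

lemma dist_precomp_surj:
  assumes d: "(X,Y,Z,u,v,w) \<in> Dist C" and Z': "Z' \<in> Ob C" "Z = Sh C Z'"
    and Z'T: "Hom C Z' T = {mzero C Z' T}" and h: "h \<in> Hom C X T"
  shows "\<exists>h'\<in>Hom C Y T. cmp C h' u = h"
proof -
  have uvw: "u \<in> Hom C X Y" "v \<in> Hom C Y Z" "w \<in> Hom C Z (Sh C X)" using dist_homs[OF d] by auto
  have Y: "Y \<in> Ob C" and T: "T \<in> Ob C" using uvw(1) h hom_objs by auto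
  have d2: "(Z, Sh C X, Sh C Y, w, mneg C (Shm C u), mneg C (Shm C v)) \<in> Dist C"
    using dist_rotate[OF dist_rotate[OF d]] .
  have sh: "Shm C h \<in> Hom C (Sh C X) (Sh C T)" using shift_hom[OF h] .
  have "cmp C (Shm C h) w \<in> Shm C ` Hom C Z' T"
    using comp_hom[OF uvw(3) sh] shift_hom_image[OF Z'(1) T] Z'(2) by simp
  then have "cmp C (Shm C h) w = mzero C Z (Sh C T)"
    using Z'T shift_zero[OF Z'(1) T] Z'(2) by simp
  then obtain k where k: "k \<in> Hom C (Sh C Y) (Sh C T)" "cmp C k (mneg C (Shm C u)) = Shm C h"
    using dist_hom_exact[OF d2 sh] by blast
  obtain k' where k': "k' \<in> Hom C Y T" "k = Shm C k'"
    using k(1) shift_hom_image[OF Y T] by blast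
  have k'u: "cmp C k' u \<in> Hom C X T" using comp_hom[OF uvw(1) k'(1)] .
  have "Shm C (mneg C (cmp C k' u)) = Shm C h"
    using k(2) k'(2) comp_neg_right[OF shift_hom[OF k'(1)] shift_hom[OF uvw(1)]]
      shift_comp[OF uvw(1) k'(1)] shift_neg[OF k'u] by simp
  then have "cmp C (mneg C k') u = h"
    using shift_hom_inj[OF neg_hom[OF k'u] h] comp_neg_left[OF k'(1) uvw(1)] by simp
  then show ?thesis using neg_hom[OF k'(1)] by blast
qed

lemma dist_precomp_bij:
  assumes d: "(X,Y,Z,u,v,w) \<in> Dist C" and Z': "Z' \<in> Ob C" "Z = Sh C Z'"
    and ZT: "Hom C Z T = {mzero C Z T}" and Z'T: "Hom C Z' T = {mzero C Z' T}"
  shows "bij_betw (\<lambda>h. cmp C h u) (Hom C Y T) (Hom C X T)"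
  unfolding bij_betw_def
proof
  show "inj_on (\<lambda>h. cmp C h u) (Hom C Y T)" using dist_precomp_inj[OF d ZT] .
  have u: "u \<in> Hom C X Y" using dist_homs[OF d] by blast
  show "(\<lambda>h. cmp C h u) ` Hom C Y T = Hom C X T"
    using comp_hom[OF u] dist_precomp_surj[OF d Z' Z'T] by blast
qed

lemma cone_precomp_bij:
  assumes gm: "good_metric C B" and cone: "cone_in C E e n (B (Suc s))" and T: "T \<in> perp C (B s)"
  shows "bij_betw (\<lambda>g. cmp C g (e n)) (Hom C (E (Suc n)) T) (Hom C (E n) T)"
proof -
  obtain Z v w where d: "(E n, E (Suc n), Z, e n, v, w) \<in> Dist C" and Z: "Z \<in> B (Suc s)"
    using cone unfolding cone_in_def by blast
  have gms: "B (Suc s) \<subseteq> Ob C" "B (Suc s) \<subseteq> B s" "{X\<in>Ob C. Sh C X \<in> B (Suc s)} \<subseteq> B s"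
    using gm[unfolded good_metric_def, rule_format, of s]
      gm[unfolded good_metric_def, rule_format, of "Suc s"] by blast+
  obtain Z' where Z': "Z' \<in> Ob C" "Z = Sh C Z'"
    using shift_obj_bij gms(1) Z unfolding bij_betw_def by blast
  have "Z \<in> B s" "Z' \<in> B s" using gms Z Z' by auto
  then have "Hom C Z T = {mzero C Z T}" "Hom C Z' T = {mzero C Z' T}"
    using T unfolding perp_def by auto
  then show ?thesis using dist_precomp_bij[OF d Z'] by blast
qed

end

lemma hom_mod_simps[simp]:
  "modCar (hom_mod C X) A = Hom C A X"
  "modAct (hom_mod C X) A B h g = cmp C g h"
  "modAdd (hom_mod C X) A g1 g2 = madd C g1 g2"
  unfolding hom_mod_def by simp_all

lemma mod_hom_carrier:
  "mod_hom C M N \<eta> \<Longrightarrow> A \<in> Ob C \<Longrightarrow> x \<in> modCar M A \<Longrightarrow> \<eta> A x \<in> modCar N A"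
  unfolding mod_hom_def by blast

lemma mod_hom_add:
  "mod_hom C M N \<eta> \<Longrightarrow> A \<in> Ob C \<Longrightarrow> x \<in> modCar M A \<Longrightarrow> y \<in> modCar M A \<Longrightarrow>
    \<eta> A (modAdd M A x y) = modAdd N A (\<eta> A x) (\<eta> A y)"
  unfolding mod_hom_def by blast

lemma mod_hom_act:
  "mod_hom C M N \<eta> \<Longrightarrow> A \<in> Ob C \<Longrightarrow> B \<in> Ob C \<Longrightarrow> h \<in> Hom C A B \<Longrightarrow> x \<in> modCar M B \<Longrightarrow>
    \<eta> A (modAct M A B h x) = modAct N A B h (\<eta> B x)"
  unfolding mod_hom_def by blast

lemma mod_hom_comp:
  assumes \<eta>: "mod_hom C M N \<eta>" and \<theta>: "mod_hom C N P \<theta>"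
  shows "mod_hom C M P (\<lambda>A x. \<theta> A (\<eta> A x))"
  unfolding mod_hom_def
  by (simp add: mod_hom_carrier[OF \<eta>] mod_hom_carrier[OF \<theta>] mod_hom_add[OF \<eta>]
      mod_hom_add[OF \<theta>] mod_hom_act[OF \<eta>] mod_hom_act[OF \<theta>])

lemma direct_summandI_factor:
  assumes i: "mod_hom C M P i" and j: "mod_hom C P N j" and r: "mod_hom C N M r"
    and retract: "\<forall>A\<in>Ob C. \<forall>x\<in>modCar M A. r A (j A (i A x)) = x"
  shows "direct_summand C M P"
  unfolding direct_summand_def
  using i mod_hom_comp[OF j r] retract by (intro exI[of _ i] exI[of _ "\<lambda>A x. r A (j A x)"]) simp

section \<open>Germs and the module \<open>moco E\<close>\<close>

lemma trm_same: "trm C E e n n = idm C (E n)"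
  unfolding trm_def by simp

lemma trm_Suc: "n \<le> k \<Longrightarrow> trm C E e n (Suc k) = cmp C (e k) (trm C E e n k)"
  unfolding trm_def by (simp add: Suc_diff_le)

lemma germ_rel_iff:
  "germ_rel C E e A (n,f) (m,g) \<longleftrightarrow> f \<in> Hom C A (E n) \<and> g \<in> Hom C A (E m) \<and>
     (\<exists>k\<ge>max n m. cmp C (trm C E e n k) f = cmp C (trm C E e m k) g)"
  unfolding germ_rel_def by simp

lemma germ_rel_sym: "germ_rel C E e A p q \<Longrightarrow> germ_rel C E e A q p"
  unfolding germ_rel_def by (cases p; cases q) (auto simp: max.commute)

lemma moco_carrier_iff:
  "x \<in> modCar (moco C E e) A \<longleftrightarrow> (\<exists>n f. f \<in> Hom C A (E n) \<and> x = germ C E e A (n,f))"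
  unfolding moco_def by auto

locale sequence = preadditive +
  fixes E :: "nat \<Rightarrow> 'o" and e :: "nat \<Rightarrow> 'm"
  assumes seq: "is_seq C E e"
begin

lemma seq_obj: "E n \<in> Ob C"
  using seq unfolding is_seq_def by blast

lemma seq_hom: "e n \<in> Hom C (E n) (E (Suc n))"
  using seq unfolding is_seq_def by blast

lemma germ_in_moco: "f \<in> Hom C A (E n) \<Longrightarrow> germ C E e A (n,f) \<in> modCar (moco C E e) A"
  unfolding moco_carrier_iff by blast

lemma trm_hom: "n \<le> k \<Longrightarrow> trm C E e n k \<in> Hom C (E n) (E k)"
proof (induction k rule: dec_induct)
  case base
  show ?case using id_hom[OF seq_obj] by (simp add: trm_same)
next
  case (step k)
  then show ?case using comp_hom[OF _ seq_hom] by (simp add: trm_Suc)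
qed

lemma trm_step: "trm C E e k (Suc k) = e k"
  using comp_id_right[OF seq_hom] by (simp add: trm_Suc trm_same)

lemma trm_trans:
  assumes nk: "n \<le> k" and kl: "k \<le> l"
  shows "trm C E e n l = cmp C (trm C E e k l) (trm C E e n k)"
  using kl
proof (induction l rule: dec_induct)
  case base
  show ?case using comp_id_left[OF trm_hom[OF nk]] by (simp add: trm_same)
next
  case (step l)
  then show ?case
    using nk comp_assoc[OF trm_hom[OF nk] trm_hom[of k l] seq_hom] by (simp add: trm_Suc)
qed

lemma trm_comp_trm:
  assumes "n \<le> k" "k \<le> l" "f \<in> Hom C A (E n)"
  shows "cmp C (trm C E e k l) (cmp C (trm C E e n k) f) = cmp C (trm C E e n l) f"
  using trm_trans[OF assms(1,2)] comp_assoc[OF assms(3) trm_hom[OF assms(1)] trm_hom[OF assms(2)]]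
  by simp

lemma trm_Suc_left: "k < l \<Longrightarrow> trm C E e k l = cmp C (trm C E e (Suc k) l) (e k)"
  using trm_trans[of k "Suc k" l] trm_step by simp

lemma germ_rel_eventually:
  assumes "germ_rel C E e A (n,f) (m,g)"
  obtains k where "max n m \<le> k"
    and "\<And>l. k \<le> l \<Longrightarrow> cmp C (trm C E e n l) f = cmp C (trm C E e m l) g"
proof -
  obtain k where k: "max n m \<le> k" "cmp C (trm C E e n k) f = cmp C (trm C E e m k) g"
    and f: "f \<in> Hom C A (E n)" and g: "g \<in> Hom C A (E m)"
    using assms unfolding germ_rel_iff by blast
  have "cmp C (trm C E e n l) f = cmp C (trm C E e m l) g" if "k \<le> l" for l
    using k trm_comp_trm[OF _ that f] trm_comp_trm[OF _ that g] by simp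
  with k(1) show ?thesis by (rule that)
qed

lemma germ_rel_refl: "f \<in> Hom C A (E n) \<Longrightarrow> germ_rel C E e A (n,f) (n,f)"
  unfolding germ_rel_iff by auto

lemma germ_rel_trans:
  assumes "germ_rel C E e A p q" "germ_rel C E e A q r"
  shows "germ_rel C E e A p r"
proof -
  obtain n f m g l h where pqr: "p = (n,f)" "q = (m,g)" "r = (l,h)" by (cases p; cases q; cases r)
  obtain k1 where k1: "max n m \<le> k1"
    "\<And>k. k1 \<le> k \<Longrightarrow> cmp C (trm C E e n k) f = cmp C (trm C E e m k) g"
    using germ_rel_eventually assms(1) unfolding pqr by blast
  obtain k2 where k2: "max m l \<le> k2"
    "\<And>k. k2 \<le> k \<Longrightarrow> cmp C (trm C E e m k) g = cmp C (trm C E e l k) h"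
    using germ_rel_eventually assms(2) unfolding pqr by blast
  have "cmp C (trm C E e n (max k1 k2)) f = cmp C (trm C E e l (max k1 k2)) h"
    using k1(2) k2(2) by simp
  then show ?thesis
    using assms k1(1) k2(1) unfolding pqr germ_rel_iff by (intro conjI exI[of _ "max k1 k2"]) auto
qed

lemma germ_eq:
  assumes "germ_rel C E e A p q"
  shows "germ C E e A p = germ C E e A q"
  unfolding germ_def
  using germ_rel_trans[OF assms] germ_rel_trans[OF germ_rel_sym[OF assms]] by blast

lemma germ_eqD:
  assumes f: "f \<in> Hom C A (E n)" and eq: "germ C E e A (n,f) = germ C E e A q"
  shows "germ_rel C E e A (n,f) q"
proof -
  have "(n,f) \<in> germ C E e A (n,f)" using germ_rel_refl[OF f] by (simp add: germ_def)
  then have "(n,f) \<in> germ C E e A q" using eq by simp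
  then show ?thesis using germ_rel_sym by (simp add: germ_def)
qed

lemma germ_rel_rep:
  assumes f: "f \<in> Hom C A (E n)"
  shows "germ_rel C E e A (n,f) (rep (germ C E e A (n,f)))"
proof -
  have "(n,f) \<in> germ C E e A (n,f)" using germ_rel_refl[OF f] unfolding germ_def by simp
  then have "rep (germ C E e A (n,f)) \<in> germ C E e A (n,f)" unfolding rep_def by (rule someI)
  then show ?thesis unfolding germ_def by simp
qed

lemma moco_rep:
  assumes "x \<in> modCar (moco C E e) A"
  shows "snd (rep x) \<in> Hom C A (E (fst (rep x))) \<and> x = germ C E e A (rep x)"
proof -
  obtain n f where f: "f \<in> Hom C A (E n)" and x: "x = germ C E e A (n,f)"
    using assms unfolding moco_carrier_iff by blast
  obtain m g where mg: "rep x = (m,g)" by (cases "rep x")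
  have r: "germ_rel C E e A (n,f) (m,g)" using germ_rel_rep[OF f] x mg by simp
  then have "g \<in> Hom C A (E m)" unfolding germ_rel_iff by blast
  moreover have "x = germ C E e A (m,g)" using germ_eq[OF r] x by simp
  ultimately show ?thesis using mg by simp
qed

lemma germ_rel_comp:
  assumes r: "germ_rel C E e B (n,f) (m,g)" and h: "h \<in> Hom C A B"
  shows "germ_rel C E e A (n, cmp C f h) (m, cmp C g h)"
proof -
  obtain k where k: "max n m \<le> k" "cmp C (trm C E e n k) f = cmp C (trm C E e m k) g"
    and f: "f \<in> Hom C B (E n)" and g: "g \<in> Hom C B (E m)"
    using r unfolding germ_rel_iff by blast
  have nk: "n \<le> k" and mk: "m \<le> k" using k(1) by auto
  have "cmp C (trm C E e n k) (cmp C f h) = cmp C (trm C E e m k) (cmp C g h)"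
    using k(2) comp_assoc[OF h f trm_hom[OF nk]] comp_assoc[OF h g trm_hom[OF mk]] by simp
  then show ?thesis unfolding germ_rel_iff using comp_hom[OF h f] comp_hom[OF h g] k(1) by blast
qed

lemma moco_act_germ:
  assumes f: "f \<in> Hom C B (E n)" and h: "h \<in> Hom C A B"
  shows "modAct (moco C E e) A B h (germ C E e B (n,f)) = germ C E e A (n, cmp C f h)"
proof -
  obtain m g where mg: "rep (germ C E e B (n,f)) = (m,g)" by (cases "rep (germ C E e B (n,f))")
  have "modAct (moco C E e) A B h (germ C E e B (n,f)) = germ C E e A (m, cmp C g h)"
    unfolding moco_def using mg by simp
  also have "\<dots> = germ C E e A (n, cmp C f h)"
  proof (rule germ_eq)
    have "germ_rel C E e B (n,f) (m,g)" using germ_rel_rep[OF f] mg by simp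
    then show "germ_rel C E e A (m, cmp C g h) (n, cmp C f h)"
      by (rule germ_rel_sym[OF germ_rel_comp[OF _ h]])
  qed
  finally show ?thesis .
qed

lemma moco_add_germ_same:
  assumes h1: "h1 \<in> Hom C A (E m)" and h2: "h2 \<in> Hom C A (E m)"
  shows "modAdd (moco C E e) A (germ C E e A (m,h1)) (germ C E e A (m,h2))
    = germ C E e A (m, madd C h1 h2)"
proof -
  obtain n1 f1 where r1: "rep (germ C E e A (m,h1)) = (n1,f1)" by (cases "rep (germ C E e A (m,h1))")
  obtain n2 f2 where r2: "rep (germ C E e A (m,h2)) = (n2,f2)" by (cases "rep (germ C E e A (m,h2))")
  have rel1: "germ_rel C E e A (m,h1) (n1,f1)" using germ_rel_rep[OF h1] r1 by simp
  have rel2: "germ_rel C E e A (m,h2) (n2,f2)" using germ_rel_rep[OF h2] r2 by simp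
  have f1: "f1 \<in> Hom C A (E n1)" and f2: "f2 \<in> Hom C A (E n2)"
    using rel1 rel2 unfolding germ_rel_iff by blast+
  obtain k1 where k1: "max m n1 \<le> k1"
    "\<And>l. k1 \<le> l \<Longrightarrow> cmp C (trm C E e m l) h1 = cmp C (trm C E e n1 l) f1"
    using germ_rel_eventually[OF rel1] by blast
  obtain k2 where k2: "max m n2 \<le> k2"
    "\<And>l. k2 \<le> l \<Longrightarrow> cmp C (trm C E e m l) h2 = cmp C (trm C E e n2 l) f2"
    using germ_rel_eventually[OF rel2] by blast
  define K where "K = max n1 n2"
  define L where "L = max k1 k2"
  define S where "S = madd C (cmp C (trm C E e n1 K) f1) (cmp C (trm C E e n2 K) f2)"
  have n1K: "n1 \<le> K" and n2K: "n2 \<le> K" and KL: "K \<le> L" and mL: "m \<le> L"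
    using k1(1) k2(1) unfolding K_def L_def by auto
  have a1: "cmp C (trm C E e n1 K) f1 \<in> Hom C A (E K)" using comp_hom[OF f1 trm_hom[OF n1K]] .
  have a2: "cmp C (trm C E e n2 K) f2 \<in> Hom C A (E K)" using comp_hom[OF f2 trm_hom[OF n2K]] .
  have "modAdd (moco C E e) A (germ C E e A (m,h1)) (germ C E e A (m,h2)) = germ C E e A (K, S)"
    unfolding moco_def S_def K_def using r1 r2 by (simp add: Let_def)
  also have "\<dots> = germ C E e A (m, madd C h1 h2)"
  proof (rule germ_eq)
    have "cmp C (trm C E e K L) S = madd C (cmp C (trm C E e n1 L) f1) (cmp C (trm C E e n2 L) f2)"
      unfolding S_def using comp_distrib_left[OF a1 a2 trm_hom[OF KL]]
        trm_comp_trm[OF n1K KL f1] trm_comp_trm[OF n2K KL f2] by simp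
    also have "\<dots> = cmp C (trm C E e m L) (madd C h1 h2)"
      using comp_distrib_left[OF h1 h2 trm_hom[OF mL]] k1(2) k2(2) unfolding L_def by simp
    finally show "germ_rel C E e A (K, S) (m, madd C h1 h2)"
      unfolding germ_rel_iff using add_hom[OF a1 a2] add_hom[OF h1 h2] KL mL
      unfolding S_def by (intro conjI exI[of _ L]) auto
  qed
  finally show ?thesis .
qed

lemma germ_eq_trm:
  assumes nk: "n \<le> k" and f: "f \<in> Hom C A (E n)"
  shows "germ C E e A (n,f) = germ C E e A (k, cmp C (trm C E e n k) f)"
proof (rule germ_eq)
  have t: "cmp C (trm C E e n k) f \<in> Hom C A (E k)" using comp_hom[OF f trm_hom[OF nk]] .
  then show "germ_rel C E e A (n,f) (k, cmp C (trm C E e n k) f)"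
    unfolding germ_rel_iff using f nk comp_id_left[OF t]
    by (intro conjI exI[of _ k]) (auto simp: trm_same)
qed

lemma germ_at_hom: "mod_hom C (hom_mod C (E m)) (moco C E e) (\<lambda>A h. germ C E e A (m,h))"
  unfolding mod_hom_def by (simp add: germ_in_moco moco_add_germ_same moco_act_germ)

end

section \<open>Cocones and morphisms to representables\<close>

definition is_cocone ::
  "('o,'m,'z) tcat_scheme \<Rightarrow> (nat \<Rightarrow> 'o) \<Rightarrow> (nat \<Rightarrow> 'm) \<Rightarrow> 'o \<Rightarrow> (nat \<Rightarrow> 'm) \<Rightarrow> bool" where
  "is_cocone C E e T G \<longleftrightarrow> (\<forall>k. G k \<in> Hom C (E k) T \<and> cmp C (G (Suc k)) (e k) = G k)"

text \<open>The object argument is unused; it only gives \<open>cocone_map C G\<close> the shape of a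
  morphism of modules.\<close>

definition cocone_map :: "('o,'m,'z) tcat_scheme \<Rightarrow> (nat \<Rightarrow> 'm) \<Rightarrow> 'o \<Rightarrow> (nat \<times> 'm) set \<Rightarrow> 'm" where
  "cocone_map C G A x = cmp C (G (fst (rep x))) (snd (rep x))"

context sequence
begin

lemma cocone_hom: "is_cocone C E e T G \<Longrightarrow> G k \<in> Hom C (E k) T"
  unfolding is_cocone_def by blast

lemma cocone_trm:
  assumes G: "is_cocone C E e T G" and jk: "j \<le> k"
  shows "cmp C (G k) (trm C E e j k) = G j"
  using jk
proof (induction k rule: dec_induct)
  case base
  show ?case using comp_id_right[OF cocone_hom[OF G]] by (simp add: trm_same)
next
  case (step k)
  have "cmp C (G (Suc k)) (trm C E e j (Suc k)) = cmp C (cmp C (G (Suc k)) (e k)) (trm C E e j k)"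
    using comp_assoc[OF trm_hom[OF step.hyps(1)] seq_hom cocone_hom[OF G]] step.hyps(1)
    by (simp add: trm_Suc)
  then show ?case using G step.IH unfolding is_cocone_def by simp
qed

lemma cocone_germ_rel_eq:
  assumes G: "is_cocone C E e T G" and r: "germ_rel C E e A (j,a) (j',a')"
  shows "cmp C (G j) a = cmp C (G j') a'"
proof -
  obtain k where k: "max j j' \<le> k" "cmp C (trm C E e j k) a = cmp C (trm C E e j' k) a'"
    and a: "a \<in> Hom C A (E j)" and a': "a' \<in> Hom C A (E j')"
    using r unfolding germ_rel_iff by blast
  have jk: "j \<le> k" and j'k: "j' \<le> k" using k(1) by auto
  have "cmp C (G j) a = cmp C (G k) (cmp C (trm C E e j k) a)"
    using cocone_trm[OF G jk] comp_assoc[OF a trm_hom[OF jk] cocone_hom[OF G]] by simp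
  also have "\<dots> = cmp C (G j') a'"
    using k(2) cocone_trm[OF G j'k] comp_assoc[OF a' trm_hom[OF j'k] cocone_hom[OF G]] by simp
  finally show ?thesis .
qed

lemma cocone_map_germ:
  assumes G: "is_cocone C E e T G" and a: "a \<in> Hom C A (E j)"
  shows "cocone_map C G A (germ C E e A (j,a)) = cmp C (G j) a"
proof -
  obtain j' a' where r: "rep (germ C E e A (j,a)) = (j',a')" by (cases "rep (germ C E e A (j,a))")
  then show ?thesis
    using cocone_germ_rel_eq[OF G germ_rel_rep[OF a, unfolded r]] unfolding cocone_map_def by simp
qed

lemma cocone_map_add:
  assumes G: "is_cocone C E e T G"
    and x: "x \<in> modCar (moco C E e) A" and y: "y \<in> modCar (moco C E e) A"
  shows "cocone_map C G A (modAdd (moco C E e) A x y)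
    = madd C (cocone_map C G A x) (cocone_map C G A y)"
proof -
  obtain n a where xa: "rep x = (n,a)" by (cases "rep x")
  obtain n' b where yb: "rep y = (n',b)" by (cases "rep y")
  have a: "a \<in> Hom C A (E n)" and b: "b \<in> Hom C A (E n')"
    using moco_rep[OF x] moco_rep[OF y] xa yb by auto
  define K where "K = max n n'"
  have nK: "n \<le> K" and n'K: "n' \<le> K" unfolding K_def by auto
  have a1: "cmp C (trm C E e n K) a \<in> Hom C A (E K)" using comp_hom[OF a trm_hom[OF nK]] .
  have b1: "cmp C (trm C E e n' K) b \<in> Hom C A (E K)" using comp_hom[OF b trm_hom[OF n'K]] .
  have "modAdd (moco C E e) A x y
      = germ C E e A (K, madd C (cmp C (trm C E e n K) a) (cmp C (trm C E e n' K) b))"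
    unfolding moco_def K_def using xa yb by (simp add: Let_def)
  then have "cocone_map C G A (modAdd (moco C E e) A x y)
      = madd C (cmp C (G K) (cmp C (trm C E e n K) a)) (cmp C (G K) (cmp C (trm C E e n' K) b))"
    using cocone_map_germ[OF G add_hom[OF a1 b1]] comp_distrib_left[OF a1 b1 cocone_hom[OF G]]
    by simp
  also have "\<dots> = madd C (cmp C (G n) a) (cmp C (G n') b)"
    using comp_assoc[OF a trm_hom[OF nK] cocone_hom[OF G]] cocone_trm[OF G nK]
      comp_assoc[OF b trm_hom[OF n'K] cocone_hom[OF G]] cocone_trm[OF G n'K] by simp
  finally show ?thesis unfolding cocone_map_def using xa yb by simp
qed

lemma cocone_map_act:
  assumes G: "is_cocone C E e T G"
    and h: "h \<in> Hom C A B" and x: "x \<in> modCar (moco C E e) B"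
  shows "cocone_map C G A (modAct (moco C E e) A B h x) = cmp C (cocone_map C G B x) h"
proof -
  obtain n a where xa: "rep x = (n,a)" by (cases "rep x")
  have a: "a \<in> Hom C B (E n)" using moco_rep[OF x] xa by auto
  have "modAct (moco C E e) A B h x = germ C E e A (n, cmp C a h)"
    unfolding moco_def using xa by simp
  then show ?thesis
    using cocone_map_germ[OF G comp_hom[OF h a]] comp_assoc[OF h a cocone_hom[OF G]]
    unfolding cocone_map_def using xa by simp
qed

lemma cocone_map_hom:
  assumes G: "is_cocone C E e T G"
  shows "mod_hom C (moco C E e) (hom_mod C T) (cocone_map C G)"
  unfolding mod_hom_def
proof (intro ballI conjI)
  fix A assume "A \<in> Ob C"
  show "cocone_map C G A x \<in> modCar (hom_mod C T) A" if "x \<in> modCar (moco C E e) A" for x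
    using comp_hom[OF conjunct1[OF moco_rep[OF that]] cocone_hom[OF G]]
    unfolding cocone_map_def by simp
qed (simp_all add: cocone_map_add[OF G] cocone_map_act[OF G])

lemma precomp_trm_bij:
  assumes step: "\<forall>n\<ge>N. bij_betw (\<lambda>g. cmp C g (e n)) (Hom C (E (Suc n)) T) (Hom C (E n) T)"
    and Nk: "N \<le> k"
  shows "bij_betw (\<lambda>g. cmp C g (trm C E e N k)) (Hom C (E k) T) (Hom C (E N) T)"
  using Nk
proof (induction k rule: dec_induct)
  case base
  show ?case
    by (rule bij_betw_cong[THEN iffD2, OF _ bij_betw_id]) (simp add: trm_same comp_id_right)
next
  case (step k)
  have "bij_betw (\<lambda>g. cmp C g (e k)) (Hom C (E (Suc k)) T) (Hom C (E k) T)"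
    using assms(1) step.hyps(1) by blast
  then have comp: "bij_betw ((\<lambda>g. cmp C g (trm C E e N k)) \<circ> (\<lambda>g. cmp C g (e k)))
      (Hom C (E (Suc k)) T) (Hom C (E N) T)"
    by (rule bij_betw_trans[OF _ step.IH])
  have eq: "cmp C g (trm C E e N (Suc k)) = ((\<lambda>g. cmp C g (trm C E e N k)) \<circ> (\<lambda>g. cmp C g (e k))) g"
    if "g \<in> Hom C (E (Suc k)) T" for g
    using comp_assoc[OF trm_hom[OF step.hyps(1)] seq_hom that] step.hyps(1) by (simp add: trm_Suc)
  show ?case by (rule bij_betw_cong[THEN iffD2, OF eq comp])
qed

lemma precomp_trm_preimages:
  assumes bij: "\<forall>k\<ge>N. bij_betw (\<lambda>g. cmp C g (trm C E e N k)) (Hom C (E k) T) (Hom C (E N) T)"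
    and g0: "g0 \<in> Hom C (E N) T"
  obtains H where "\<And>k. N \<le> k \<Longrightarrow> H k \<in> Hom C (E k) T"
    and "\<And>k. N \<le> k \<Longrightarrow> cmp C (H k) (trm C E e N k) = g0" and "H N = g0"
proof
  define H where "H k = inv_into (Hom C (E k) T) (\<lambda>g. cmp C g (trm C E e N k)) g0" for k
  show H: "H k \<in> Hom C (E k) T" "cmp C (H k) (trm C E e N k) = g0" if "N \<le> k" for k
  proof -
    have img: "g0 \<in> (\<lambda>g. cmp C g (trm C E e N k)) ` Hom C (E k) T"
      using bij that g0 unfolding bij_betw_def by blast
    show "H k \<in> Hom C (E k) T" unfolding H_def using img by (rule inv_into_into)
    show "cmp C (H k) (trm C E e N k) = g0" unfolding H_def using f_inv_into_f[OF img] by simp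
  qed
  show "H N = g0" using H[of N] comp_id_right by (simp add: trm_same)
qed

text \<open>Below \<open>N\<close> the cocone is forced to be \<open>g0\<close> composed with the transition maps.\<close>

lemma cocone_extension:
  assumes bij: "\<forall>k\<ge>N. bij_betw (\<lambda>g. cmp C g (trm C E e N k)) (Hom C (E k) T) (Hom C (E N) T)"
    and g0: "g0 \<in> Hom C (E N) T"
  obtains G where "is_cocone C E e T G" "G N = g0"
proof -
  obtain H where H: "\<And>k. N \<le> k \<Longrightarrow> H k \<in> Hom C (E k) T"
    "\<And>k. N \<le> k \<Longrightarrow> cmp C (H k) (trm C E e N k) = g0" and HN: "H N = g0"
    using precomp_trm_preimages[OF bij g0] by blast
  define G where "G k = (if N \<le> k then H k else cmp C g0 (trm C E e k N))" for k
  have G_hom: "G k \<in> Hom C (E k) T" for k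
    using H(1) comp_hom[OF trm_hom g0] unfolding G_def by auto
  have G_le: "G k = cmp C g0 (trm C E e k N)" if "k \<le> N" for k
    using that HN comp_id_right[OF g0] unfolding G_def by (auto simp: trm_same)
  have "cmp C (G (Suc k)) (e k) = G k" for k
  proof (cases "N \<le> k")
    case True
    have inj: "inj_on (\<lambda>g. cmp C g (trm C E e N k)) (Hom C (E k) T)"
      using bij True unfolding bij_betw_def by blast
    have "cmp C (cmp C (G (Suc k)) (e k)) (trm C E e N k) = cmp C (G (Suc k)) (trm C E e N (Suc k))"
      using comp_assoc[OF trm_hom[OF True] seq_hom G_hom] True by (simp add: trm_Suc)
    also have "\<dots> = cmp C (G k) (trm C E e N k)" using H True unfolding G_def by simp
    finally show ?thesis using inj_onD[OF inj] comp_hom[OF seq_hom G_hom] G_hom by blast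
  next
    case False
    then have "G (Suc k) = cmp C g0 (trm C E e (Suc k) N)" "G k = cmp C g0 (trm C E e k N)"
      using G_le by auto
    then show ?thesis
      using False comp_assoc[OF seq_hom trm_hom[of "Suc k" N] g0] trm_Suc_left[of k N] by simp
  qed
  then have "is_cocone C E e T G" unfolding is_cocone_def using G_hom by blast
  moreover have "G N = g0" using HN unfolding G_def by simp
  ultimately show ?thesis by (rule that)
qed

end

context preadditive
begin

text \<open>Naturality of \<open>\<eta>\<close> along \<open>E N \<rightarrow> E k\<close> shows that both germs agree after
  restriction to \<open>E N\<close>; injectivity of that restriction lifts the agreement to \<open>E k\<close>.\<close>

lemma moco_hom_germ_id:
  assumes sE: "is_seq C E e" and sF: "is_seq C F f"
    and eta: "mod_hom C (moco C E e) (moco C F f) \<eta>"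
    and y0: "\<eta> (E N) (germ C E e (E N) (N, idm C (E N))) = germ C F f (E N) (m, G N)"
    and G: "is_cocone C E e (F m) G"
    and inj: "\<forall>L. inj_on (\<lambda>g. cmp C g (trm C E e N k)) (Hom C (E k) (F L))"
    and Nk: "N \<le> k"
  shows "\<eta> (E k) (germ C E e (E k) (k, idm C (E k))) = germ C F f (E k) (m, G k)"
proof -
  interpret E: sequence C E e using sE by unfold_locales
  interpret F: sequence C F f using sF by unfold_locales
  let ?t = "trm C E e N k"
  have t: "?t \<in> Hom C (E N) (E k)" using E.trm_hom[OF Nk] .
  have idk: "idm C (E k) \<in> Hom C (E k) (E k)" using id_hom[OF E.seq_obj] .
  obtain l u where u: "u \<in> Hom C (E k) (F l)"
    and y: "\<eta> (E k) (germ C E e (E k) (k, idm C (E k))) = germ C F f (E k) (l,u)"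
    using mod_hom_carrier[OF eta E.seq_obj E.germ_in_moco[OF idk]] unfolding moco_carrier_iff by blast
  have shift: "modAct (moco C E e) (E N) (E k) ?t (germ C E e (E k) (k, idm C (E k)))
      = germ C E e (E N) (N, idm C (E N))"
    using E.moco_act_germ[OF idk t] comp_id_left[OF t] E.germ_eq_trm[OF Nk id_hom[OF E.seq_obj]]
      comp_id_right[OF t] by simp
  have "modAct (moco C F f) (E N) (E k) ?t (germ C F f (E k) (l,u)) = germ C F f (E N) (m, G N)"
    using mod_hom_act[OF eta E.seq_obj E.seq_obj t E.germ_in_moco[OF idk]] y shift y0 by simp
  then have "germ C F f (E N) (l, cmp C u ?t) = germ C F f (E N) (m, cmp C (G k) ?t)"
    using F.moco_act_germ[OF u t] E.cocone_trm[OF G Nk] by simp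
  then have "germ_rel C F f (E N) (l, cmp C u ?t) (m, cmp C (G k) ?t)"
    by (rule F.germ_eqD[OF comp_hom[OF t u]])
  then obtain L where L: "max l m \<le> L"
    "cmp C (trm C F f l L) (cmp C u ?t) = cmp C (trm C F f m L) (cmp C (G k) ?t)"
    unfolding germ_rel_iff by blast
  have lL: "l \<le> L" and mL: "m \<le> L" using L(1) by auto
  have Gk: "G k \<in> Hom C (E k) (F m)" using E.cocone_hom[OF G] .
  have "cmp C (trm C F f l L) u = cmp C (trm C F f m L) (G k)"
  proof (rule inj_onD[OF inj[rule_format, of L]])
    show "cmp C (trm C F f l L) u \<in> Hom C (E k) (F L)" using comp_hom[OF u F.trm_hom[OF lL]] .
    show "cmp C (trm C F f m L) (G k) \<in> Hom C (E k) (F L)" using comp_hom[OF Gk F.trm_hom[OF mL]] .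
    show "cmp C (cmp C (trm C F f l L) u) ?t = cmp C (cmp C (trm C F f m L) (G k)) ?t"
      using L(2) comp_assoc[OF t u F.trm_hom[OF lL]] comp_assoc[OF t Gk F.trm_hom[OF mL]] by simp
  qed
  then have "germ_rel C F f (E k) (l,u) (m, G k)"
    unfolding germ_rel_iff using u Gk L(1) by blast
  then show ?thesis using y F.germ_eq by simp
qed

lemma moco_hom_eq_cocone_map:
  assumes sE: "is_seq C E e" and sF: "is_seq C F f"
    and eta: "mod_hom C (moco C E e) (moco C F f) \<eta>"
    and y0: "\<eta> (E N) (germ C E e (E N) (N, idm C (E N))) = germ C F f (E N) (m, G N)"
    and G: "is_cocone C E e (F m) G"
    and inj: "\<forall>k\<ge>N. \<forall>L. inj_on (\<lambda>g. cmp C g (trm C E e N k)) (Hom C (E k) (F L))"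
    and A: "A \<in> Ob C" and x: "x \<in> modCar (moco C E e) A"
  shows "\<eta> A x = germ C F f A (m, cocone_map C G A x)"
proof -
  interpret E: sequence C E e using sE by unfold_locales
  interpret F: sequence C F f using sF by unfold_locales
  obtain j a where ja: "rep x = (j,a)" by (cases "rep x")
  have a: "a \<in> Hom C A (E j)" and xg: "x = germ C E e A (j,a)" using E.moco_rep[OF x] ja by auto
  define K where "K = max j N"
  have jK: "j \<le> K" and NK: "N \<le> K" unfolding K_def by auto
  define a' where "a' = cmp C (trm C E e j K) a"
  have a': "a' \<in> Hom C A (E K)" unfolding a'_def using comp_hom[OF a E.trm_hom[OF jK]] .
  have idK: "idm C (E K) \<in> Hom C (E K) (E K)" using id_hom[OF E.seq_obj] .
  have "x = modAct (moco C E e) A (E K) a' (germ C E e (E K) (K, idm C (E K)))"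
    using xg E.germ_eq_trm[OF jK a] E.moco_act_germ[OF idK a'] comp_id_left[OF a']
    unfolding a'_def by simp
  then have "\<eta> A x = modAct (moco C F f) A (E K) a' (\<eta> (E K) (germ C E e (E K) (K, idm C (E K))))"
    using mod_hom_act[OF eta A E.seq_obj a' E.germ_in_moco[OF idK]] by simp
  also have "\<dots> = germ C F f A (m, cmp C (G K) a')"
    using moco_hom_germ_id[OF sE sF eta y0 G _ NK] inj NK
      F.moco_act_germ[OF E.cocone_hom[OF G] a'] by simp
  also have "cmp C (G K) a' = cocone_map C G A x"
    using E.cocone_trm[OF G jK] comp_assoc[OF a E.trm_hom[OF jK] E.cocone_hom[OF G]] ja
    unfolding a'_def cocone_map_def by simp
  finally show ?thesis .
qed

lemma moco_summand_of_precomp_bij: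
  assumes sE: "is_seq C E e" and sF: "is_seq C F f"
    and iso: "mod_iso C (moco C E e) (moco C F f)"
    and bij: "\<And>L. \<forall>k\<ge>N.
      bij_betw (\<lambda>g. cmp C g (trm C E e N k)) (Hom C (E k) (F L)) (Hom C (E N) (F L))"
  obtains m where "direct_summand C (moco C E e) (hom_mod C (F m))"
proof -
  interpret E: sequence C E e using sE by unfold_locales
  interpret F: sequence C F f using sF by unfold_locales
  obtain \<eta> \<theta> where \<eta>: "mod_hom C (moco C E e) (moco C F f) \<eta>"
    and \<theta>: "mod_hom C (moco C F f) (moco C E e) \<theta>"
    and \<theta>\<eta>: "\<forall>A\<in>Ob C. \<forall>x\<in>modCar (moco C E e) A. \<theta> A (\<eta> A x) = x"
    using iso unfolding mod_iso_def by (elim exE conjE) (rule that; assumption)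
  have idN: "idm C (E N) \<in> Hom C (E N) (E N)" using id_hom[OF E.seq_obj] .
  obtain m g0 where g0: "g0 \<in> Hom C (E N) (F m)"
    and y0: "\<eta> (E N) (germ C E e (E N) (N, idm C (E N))) = germ C F f (E N) (m, g0)"
    using mod_hom_carrier[OF \<eta> E.seq_obj E.germ_in_moco[OF idN]] unfolding moco_carrier_iff by blast
  obtain G where G: "is_cocone C E e (F m) G" "G N = g0"
    using E.cocone_extension[OF bij g0] by blast
  have inj: "\<forall>k\<ge>N. \<forall>L. inj_on (\<lambda>g. cmp C g (trm C E e N k)) (Hom C (E k) (F L))"
    using bij unfolding bij_betw_def by blast
  have "direct_summand C (moco C E e) (hom_mod C (F m))"
  proof (rule direct_summandI_factor[OF E.cocone_map_hom[OF G(1)] F.germ_at_hom \<theta>], intro ballI)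
    fix A x assume "A \<in> Ob C" "x \<in> modCar (moco C E e) A"
    then show "\<theta> A (germ C F f A (m, cocone_map C G A x)) = x"
      using moco_hom_eq_cocone_map[OF sE sF \<eta> _ G(1) inj] y0 G(2) \<theta>\<eta> by simp
  qed
  then show ?thesis by (rule that)
qed

end

theorem lemma6p2:
  fixes C :: "('o,'m) tcat" and B :: "nat \<Rightarrow> 'o set"
    and E F :: "nat \<Rightarrow> 'o" and e f :: "nat \<Rightarrow> 'm" and s :: nat
  assumes "is_triangulated C"
    and "good_metric C B"
    and "is_seq C E e"
    and "is_cauchy C B E e"
    and "compactly_supported C (B s) E e"
    and "is_seq C F f"
    and "\<forall>n. F n \<in> perp C (B s)"
    and "mod_iso C (moco C E e) (moco C F f)"
  shows "\<exists>X\<in>Ob C. direct_summand C (moco C E e) (hom_mod C X)"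
proof -
  interpret triangulated C by (rule triangulated.intro) fact
  interpret E: sequence C E e using assms(3) by unfold_locales
  obtain N where N: "\<forall>n\<ge>N. cone_in C E e n (B (Suc s))"
    using assms(4) unfolding is_cauchy_def by blast
  have step: "\<forall>n\<ge>N. bij_betw (\<lambda>g. cmp C g (e n)) (Hom C (E (Suc n)) (F L)) (Hom C (E n) (F L))"
    for L using cone_precomp_bij[OF assms(2) _ assms(7)[rule_format]] N by blast
  have bij: "\<forall>k\<ge>N. bij_betw (\<lambda>g. cmp C g (trm C E e N k)) (Hom C (E k) (F L)) (Hom C (E N) (F L))"
    for L using E.precomp_trm_bij[OF step] by blast
  obtain m where "direct_summand C (moco C E e) (hom_mod C (F m))"
    using moco_summand_of_precomp_bij[OF assms(3,6,8) bij] .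
  then show ?thesis using assms(6) unfolding is_seq_def by blast
qed

end
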